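(* Let $d\ge k\ge 0$ be integers. Then $\frac{k+1}{d+k+1}\le f(k,d)\le \frac{k+1}{d+1}$.
   Context: For a graph $G=(V,E)$ and an integer $k\ge 0$, a $k$-independent set is a set $S\subseteq V$ such that the induced subgraph $G[S]$ has maximum degree at most $k$; $\alpha_k(G)$ denotes the maximum cardinality of a $k$-independent set of $G$. $n(G)$ is the number of vertices and $d(G)=2|E(G)|/n(G)$ the average degree. For integers $d,k\ge 0$, $f(k,d)=\inf\left\{\frac{\alpha_k(G)}{n(G)} : G \text{ a finite simple graph with at least one vertex and } d(G)\le d\right\}$. *)

theory Defs
  imports Complex_Main
begin

text \<open>Every finite simple graph
  is isomorphic to one of this form, and all quantities below are
  isomorphism invariant.\<close>

definition simple_graph :: "nat set \<Rightarrow> nat set set \<Rightarrow> bool" where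
  "simple_graph V E \<longleftrightarrow> finite V \<and> (\<forall>e\<in>E. e \<subseteq> V \<and> card e = 2)"

definition k_independent :: "nat set \<Rightarrow> nat set set \<Rightarrow> nat \<Rightarrow> nat set \<Rightarrow> bool" where
  "k_independent V E k S \<longleftrightarrow>
     S \<subseteq> V \<and> (\<forall>u\<in>S. card {v\<in>S. {u, v} \<in> E} \<le> k)"

definition alpha_k :: "nat \<Rightarrow> nat set \<Rightarrow> nat set set \<Rightarrow> nat" where
  "alpha_k k V E = Max {card S | S. k_independent V E k S}"

definition avg_degree :: "nat set \<Rightarrow> nat set set \<Rightarrow> real" where
  "avg_degree V E = 2 * real (card E) / real (card V)"

definition f_kd :: "nat \<Rightarrow> nat \<Rightarrow> real" where
  "f_kd k d = Inf {real (alpha_k k V E) / real (card V) | V E.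
                    simple_graph V E \<and> V \<noteq> {} \<and> avg_degree V E \<le> real d}"

end

theory Submission
  imports Defs
begin

(* Lower bound.  Write a = k+1, n = |V|, m = |E|.  We show the Caro-Tuza type
   inequality  a n^2 <= alpha_k(G) (2m + a n),  which for 2m <= d n gives
   alpha_k(G)/n >= a/(d+a).  Its proof is an induction on n driven by a lemma of
   Favaron: maximising the potential (2k+1)|S| - 2 e(S) over S <= V produces a
   k-independent set S such that every vertex outside S has at least k+1
   neighbours in S.  Deleting S leaves a smaller graph G[V-S]; counting the edges
   between V-S and S and a two-case real inequality close the induction.

   Upper bound.  The complete graph K_{d+1} has average degree d and every
   k-independent set in it has at most k+1 vertices.

   The theorem follows by taking the infimum over all admissible graphs; neither
   bound needs the hypothesis k <= d. *)

definition deg_in :: "nat set set \<Rightarrow> nat set \<Rightarrow> nat \<Rightarrow> nat" where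
  "deg_in E S u = card {v\<in>S. {u, v} \<in> E}"

definition edges_within :: "nat set set \<Rightarrow> nat set \<Rightarrow> nat set set" where
  "edges_within E S = {e\<in>E. e \<subseteq> S}"

lemma k_independent_iff_deg_in:
  "k_independent V E k S \<longleftrightarrow> S \<subseteq> V \<and> (\<forall>u\<in>S. deg_in E S u \<le> k)"
  unfolding k_independent_def deg_in_def by simp

lemma simple_graph_finite_edges:
  assumes "simple_graph V E"
  shows "finite E"
proof -
  have "E \<subseteq> Pow V" and "finite V" using assms unfolding simple_graph_def by auto
  then show ?thesis by (meson finite_Pow_iff finite_subset)
qed

text \<open>A vertex is never adjacent to itself, so removing it from S does not change
  its degree into S.\<close>

lemma deg_in_Diff_self:
  assumes "\<forall>e\<in>E. card e = 2"
  shows "deg_in E (S - {u}) u = deg_in E S u"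
proof -
  have "{u} \<notin> E" using assms by fastforce
  then have "{v\<in>S - {u}. {u, v} \<in> E} = {v\<in>S. {u, v} \<in> E}" by auto
  then show ?thesis unfolding deg_in_def by simp
qed

lemma card_edges_within_insert:
  assumes finE: "finite E" and E2: "\<forall>e\<in>E. card e = 2" and u: "u \<notin> S"
  shows "card (edges_within E (insert u S)) = card (edges_within E S) + deg_in E S u"
proof -
  let ?N = "{v\<in>S. {u, v} \<in> E}"
  have split: "edges_within E (insert u S) = edges_within E S \<union> (\<lambda>v. {u, v}) ` ?N"
  proof (intro equalityI subsetI)
    fix e assume e: "e \<in> edges_within E (insert u S)"
    show "e \<in> edges_within E S \<union> (\<lambda>v. {u, v}) ` ?N"
    proof (cases "u \<in> e")
      case True
      from e E2 obtain x y where "e = {x, y}" "x \<noteq> y"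
        unfolding edges_within_def by (auto simp: card_2_iff)
      with True obtain v where v: "e = {u, v}" "v \<noteq> u" by blast
      with e have "v \<in> ?N" unfolding edges_within_def by auto
      with v show ?thesis by blast
    next
      case False
      with e show ?thesis unfolding edges_within_def by auto
    qed
  qed (auto simp: edges_within_def)
  have disjoint: "edges_within E S \<inter> (\<lambda>v. {u, v}) ` ?N = {}"
    using u unfolding edges_within_def by auto
  have "inj_on (\<lambda>v. {u, v}) ?N" using u by (auto simp: inj_on_def doubleton_eq_iff)
  then have "card ((\<lambda>v. {u, v}) ` ?N) = deg_in E S u" by (simp add: card_image deg_in_def)
  moreover have "finite (edges_within E S)" "finite ((\<lambda>v. {u, v}) ` ?N)"
    using finE by (auto simp: edges_within_def intro: finite_subset)
  ultimately show ?thesis unfolding split using disjoint by (simp add: card_Un_disjoint)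
qed

text \<open>For disjoint R and S, the edges inside R and the edges between R and S are
  distinct edges of E.\<close>

lemma edges_within_plus_cross_le:
  assumes finE: "finite E" and finR: "finite R" and finS: "finite S" and disj: "R \<inter> S = {}"
  shows "card (edges_within E R) + (\<Sum>u\<in>R. deg_in E S u) \<le> card E"
proof -
  let ?P = "Sigma R (\<lambda>u. {v\<in>S. {u, v} \<in> E})"
  let ?cross = "(\<lambda>(u, v). {u, v}) ` ?P"
  have "card ?P = (\<Sum>u\<in>R. deg_in E S u)"
    unfolding deg_in_def using finR finS by (subst card_SigmaI) auto
  moreover have "inj_on (\<lambda>(u, v). {u, v}) ?P"
    using disj unfolding inj_on_def by (auto simp: doubleton_eq_iff)
  ultimately have cross: "card ?cross = (\<Sum>u\<in>R. deg_in E S u)" by (simp add: card_image)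
  have "edges_within E R \<inter> ?cross = {}" using disj unfolding edges_within_def by auto
  moreover have "edges_within E R \<union> ?cross \<subseteq> E" unfolding edges_within_def by auto
  moreover have "finite (edges_within E R)" "finite ?cross"
    using finE unfolding edges_within_def by (auto intro: finite_subset)
  ultimately have "card (edges_within E R) + card ?cross = card (edges_within E R \<union> ?cross)"
    by (simp add: card_Un_disjoint)
  also have "\<dots> \<le> card E" using \<open>edges_within E R \<union> ?cross \<subseteq> E\<close> finE by (rule card_mono[rotated])
  finally show ?thesis using cross by simp
qed

section \<open>Favaron's partition lemma\<close>

text \<open>The potential whose maximisers give Favaron's partition; adding a vertex u to
  a set T changes it by 2k + 1 - 2 deg_T(u), which is positive exactly when
  deg_T(u) <= k.\<close>

definition favaron_potential :: "nat set set \<Rightarrow> nat \<Rightarrow> nat set \<Rightarrow> int" where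
  "favaron_potential E k S = int (2 * k + 1) * int (card S) - 2 * int (card (edges_within E S))"

lemma favaron_potential_insert:
  assumes "finite E" "\<forall>e\<in>E. card e = 2" "finite T" "u \<notin> T"
  shows "favaron_potential E k (insert u T)
           = favaron_potential E k T + int (2 * k + 1) - 2 * int (deg_in E T u)"
  using assms card_edges_within_insert[of E u T]
  by (simp add: favaron_potential_def algebra_simps)

lemma favaron_partition:
  assumes sg: "simple_graph V E"
  obtains S where "S \<subseteq> V" "\<forall>u\<in>S. deg_in E S u \<le> k" "\<forall>u\<in>V - S. k + 1 \<le> deg_in E S u"
proof -
  let ?\<Phi> = "favaron_potential E k"
  have finV: "finite V" and E2: "\<forall>e\<in>E. card e = 2" using sg unfolding simple_graph_def by auto
  have finE: "finite E" using sg by (rule simple_graph_finite_edges)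
  have "Max (?\<Phi> ` Pow V) \<in> ?\<Phi> ` Pow V" using finV by (intro Max_in) auto
  then obtain S where SV: "S \<subseteq> V" and S_Max: "?\<Phi> S = Max (?\<Phi> ` Pow V)" by auto
  have max: "?\<Phi> T \<le> ?\<Phi> S" if "T \<subseteq> V" for T
    unfolding S_Max using that finV by (intro Max_ge) auto
  have finS: "finite S" using SV finV by (rule finite_subset)
  have "deg_in E S u \<le> k" if u: "u \<in> S" for u
  proof -
    have "?\<Phi> S = ?\<Phi> (insert u (S - {u}))" using u by (simp add: insert_absorb)
    also have "\<dots> = ?\<Phi> (S - {u}) + int (2 * k + 1) - 2 * int (deg_in E S u)"
      using favaron_potential_insert[OF finE E2, where T = "S - {u}" and u = u] finS
        deg_in_Diff_self[OF E2] by simp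
    finally have "?\<Phi> (S - {u}) \<le> ?\<Phi> (S - {u}) + int (2 * k + 1) - 2 * int (deg_in E S u)"
      using max[of "S - {u}"] SV by auto
    then show ?thesis by linarith
  qed
  moreover have "k + 1 \<le> deg_in E S u" if u: "u \<in> V - S" for u
  proof -
    have "?\<Phi> (insert u S) \<le> ?\<Phi> S" using SV u by (intro max) auto
    then have "int (2 * k + 1) - 2 * int (deg_in E S u) \<le> 0"
      using favaron_potential_insert[OF finE E2 finS, where u = u] u by simp
    then show ?thesis by linarith
  qed
  ultimately show ?thesis using SV that by blast
qed

section \<open>The quadratic lower bound on alpha_k\<close>

text \<open>The real inequality behind one deletion step: a graph on s + r vertices with
  m edges splits into a part of size s (a k-independent set) and a remainder of
  size r with e edges, and at least a r further edges run between them.  Depending on the sign of 2es - ar(r-s), either s alone or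
  the remainder's bound already suffices.\<close>

lemma deletion_step_inequality:
  fixes a s r e m t :: real
  assumes a: "a > 0" and s: "s \<ge> 0" and r: "r \<ge> 0" and e: "e \<ge> 0"
    and m: "e + a * r \<le> m" and t: "s \<le> t"
    and remainder: "a * r^2 \<le> t * (2 * e + a * r)"
  shows "a * (s + r)^2 \<le> t * (2 * m + a * (s + r))"
proof -
  define X where "X = 2 * e + 2 * a * r + a * (s + r)"
  have "a * (s + r)^2 \<le> t * X"
  proof (cases "a * r * (r - s) \<le> 2 * e * s")
    case True
    have "s * X - a * (s + r)^2 = 2 * e * s - a * r * (r - s)"
      unfolding X_def by (simp add: algebra_simps power2_eq_square)
    moreover have "s * X \<le> t * X" using t a r s e unfolding X_def by (intro mult_right_mono) auto
    ultimately show ?thesis using True by linarith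
  next
    case False
    define Y where "Y = 2 * e + a * r"
    have "r > 0" using False r e s by (cases "r = 0") (auto simp: zero_le_mult_iff)
    then have Y_pos: "Y > 0" unfolding Y_def using a e by (simp add: add_nonneg_pos)
    have "a * r^2 * X - a * (s + r)^2 * Y = a * (2 * r + s) * (a * r * (r - s) - 2 * e * s)"
      unfolding X_def Y_def by (simp add: algebra_simps power2_eq_square)
    moreover have "0 \<le> a * (2 * r + s) * (a * r * (r - s) - 2 * e * s)"
      using a r s False by (intro mult_nonneg_nonneg) auto
    moreover have "a * r^2 * X \<le> t * Y * X"
      using remainder a r s e unfolding X_def Y_def by (intro mult_right_mono) auto
    ultimately have "a * (s + r)^2 * Y \<le> (t * X) * Y" by (simp add: algebra_simps)
    then show ?thesis using Y_pos by simp
  qed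
  also have "t * X \<le> t * (2 * m + a * (s + r))"
    using m s t unfolding X_def by (intro mult_left_mono) auto
  finally show ?thesis .
qed

text \<open>alpha_k is a maximum over a finite nonempty family (the empty set is always
  k-independent), so it dominates and is attained.\<close>

lemma alpha_k_family_finite:
  assumes "finite V"
  shows "finite {card S | S. k_independent V E k S}"
proof -
  have "{card S | S. k_independent V E k S} \<subseteq> {..card V}"
    using assms by (auto simp: k_independent_def intro: card_mono)
  then show ?thesis by (rule finite_subset) simp
qed

lemma card_le_alpha_k:
  assumes "finite V" "k_independent V E k S"
  shows "card S \<le> alpha_k k V E"
  unfolding alpha_k_def using assms alpha_k_family_finite by (intro Max_ge) auto

lemma alpha_k_attained:
  assumes "finite V"
  obtains S where "k_independent V E k S" "alpha_k k V E = card S"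
proof -
  have "k_independent V E k {}" unfolding k_independent_def by simp
  then have "alpha_k k V E \<in> {card S | S. k_independent V E k S}"
    unfolding alpha_k_def using assms alpha_k_family_finite by (intro Max_in) auto
  then show ?thesis using that by blast
qed

text \<open>A k-independent set of an induced subgraph is k-independent in the whole
  graph, hence alpha_k cannot grow by passing to an induced subgraph.\<close>

lemma alpha_k_induced_le:
  assumes "finite V" "R \<subseteq> V"
  shows "alpha_k k R (edges_within E R) \<le> alpha_k k V E"
proof -
  have "finite R" using assms by (rule finite_subset[rotated])
  then obtain T where T: "k_independent R (edges_within E R) k T"
    and card_T: "alpha_k k R (edges_within E R) = card T"
    by (rule alpha_k_attained)
  have "T \<subseteq> R" using T unfolding k_independent_def by simp
  then have "{v\<in>T. {u, v} \<in> edges_within E R} = {v\<in>T. {u, v} \<in> E}" if "u \<in> T" for u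
    using that unfolding edges_within_def by auto
  then have "k_independent V E k T" using T assms(2) unfolding k_independent_def by auto
  then show ?thesis unfolding card_T by (rule card_le_alpha_k[OF assms(1)])
qed

lemma simple_graph_induced:
  assumes "simple_graph V E" "R \<subseteq> V"
  shows "simple_graph R (edges_within E R)"
  using assms finite_subset unfolding simple_graph_def edges_within_def by auto

lemma alpha_k_quadratic_bound:
  assumes "simple_graph V E"
  shows "real (k + 1) * real (card V)^2
           \<le> real (alpha_k k V E) * (2 * real (card E) + real (k + 1) * real (card V))"
  using assms
proof (induction "card V" arbitrary: V E rule: less_induct)
  case less
  have finV: "finite V" using less.prems unfolding simple_graph_def by simp
  show ?case
  proof (cases "V = {}")
    case True
    then show ?thesis by simp
  next
    case False
    obtain S where SV: "S \<subseteq> V" and inside: "\<forall>u\<in>S. deg_in E S u \<le> k"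
      and outside: "\<forall>u\<in>V - S. k + 1 \<le> deg_in E S u"
      using favaron_partition[OF less.prems] by blast
    define R where "R = V - S"
    have "S \<noteq> {}"
    proof
      assume "S = {}"
      moreover obtain u where "u \<in> V" using False by blast
      ultimately show False using outside by (simp add: deg_in_def)
    qed
    then have "R \<subset> V" unfolding R_def using SV by blast
    then have "card R < card V" using finV by (rule psubset_card_mono[rotated])
    then have remainder: "real (k + 1) * real (card R)^2 \<le> real (alpha_k k R (edges_within E R))
        * (2 * real (card (edges_within E R)) + real (k + 1) * real (card R))"
      using less.hyps simple_graph_induced[OF less.prems] R_def by blast
    have alpha_mono: "alpha_k k R (edges_within E R) \<le> alpha_k k V E"
      using finV R_def by (intro alpha_k_induced_le) auto
    have remainder': "real (k + 1) * real (card R)^2 \<le> real (alpha_k k V E)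
        * (2 * real (card (edges_within E R)) + real (k + 1) * real (card R))"
      using remainder by (rule order_trans) (use alpha_mono in \<open>intro mult_right_mono, auto\<close>)
    have S_small: "card S \<le> alpha_k k V E"
      using finV SV inside by (intro card_le_alpha_k) (simp_all add: k_independent_iff_deg_in)
    have "card (edges_within E R) + (k + 1) * card R \<le> card E"
    proof -
      have "(k + 1) * card R \<le> (\<Sum>u\<in>R. deg_in E S u)"
        using sum_bounded_below[of R "k + 1" "deg_in E S"] outside R_def by (simp add: mult.commute)
      moreover have "card (edges_within E R) + (\<Sum>u\<in>R. deg_in E S u) \<le> card E"
        using simple_graph_finite_edges[OF less.prems] finV SV R_def
        by (intro edges_within_plus_cross_le) (auto intro: finite_subset)
      ultimately show ?thesis by linarith
    qed
    then have cross_edges: "real (card (edges_within E R) + (k + 1) * card R) \<le> real (card E)"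
      by (simp only: of_nat_le_iff)
    have "card V = card S + card R"
      unfolding R_def using SV finV by (metis card_Diff_subset card_mono finite_subset le_add_diff_inverse)
    then have sizes: "real (card V) = real (card S) + real (card R)" by simp
    show ?thesis unfolding sizes
      by (rule deletion_step_inequality[where e = "real (card (edges_within E R))"])
        (use S_small cross_edges remainder' in \<open>auto simp: algebra_simps\<close>)
  qed
qed

section \<open>The two bounds on f(k,d)\<close>

text \<open>Every graph of average degree at most d has k-independence ratio at least
  (k+1)/(d+k+1): divide the quadratic bound by n and use 2m <= d n.\<close>

lemma alpha_k_ratio_lower_bound:
  assumes sg: "simple_graph V E" and ne: "V \<noteq> {}" and avg: "avg_degree V E \<le> real d"
  shows "real (k + 1) / real (d + k + 1) \<le> real (alpha_k k V E) / real (card V)"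
proof -
  define n a \<alpha> where "n = real (card V)" and "a = real (k + 1)" and "\<alpha> = real (alpha_k k V E)"
  have n_pos: "n > 0" unfolding n_def using ne sg by (simp add: simple_graph_def card_gt_0_iff)
  have a_pos: "a > 0" unfolding a_def by simp
  have edges: "2 * real (card E) \<le> real d * n"
    using avg n_pos unfolding avg_degree_def n_def by (simp add: divide_le_eq)
  have "a * n * n \<le> \<alpha> * (2 * real (card E) + a * n)"
    using alpha_k_quadratic_bound[OF sg, of k] unfolding n_def a_def \<alpha>_def
    by (simp add: power2_eq_square)
  also have "\<dots> \<le> \<alpha> * (real d * n + a * n)"
    using edges unfolding \<alpha>_def by (intro mult_left_mono) auto
  finally have "a * n * n \<le> (\<alpha> * (real d + a)) * n" by (simp add: algebra_simps)
  then have "a * n \<le> \<alpha> * (real d + a)" using n_pos by simp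
  then have "a / (real d + a) \<le> \<alpha> / n"
    using n_pos a_pos by (simp add: divide_le_eq le_divide_eq algebra_simps)
  moreover have "real (d + k + 1) = real d + a" unfolding a_def by simp
  ultimately show ?thesis unfolding a_def \<alpha>_def n_def by (simp add: ac_simps)
qed

text \<open>In a complete graph every k-independent set has at most k+1 vertices,
  since each of its vertices is adjacent to all the others.\<close>

lemma complete_graph_alpha_k:
  assumes "finite V"
  shows "alpha_k k V {e. e \<subseteq> V \<and> card e = 2} \<le> k + 1"
proof -
  obtain S where S: "k_independent V {e. e \<subseteq> V \<and> card e = 2} k S"
    and alpha: "alpha_k k V {e. e \<subseteq> V \<and> card e = 2} = card S"
    using assms by (rule alpha_k_attained)
  show ?thesis
  proof (cases "S = {}")
    case False
    then obtain u where u: "u \<in> S" by blast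
    have "S \<subseteq> V" using S unfolding k_independent_def by simp
    then have "{v\<in>S. {u, v} \<in> {e. e \<subseteq> V \<and> card e = 2}} = S - {u}"
      using u by (auto simp: card_2_iff)
    then have "card (S - {u}) \<le> k" using S u unfolding k_independent_def by auto
    then show ?thesis using alpha u by (simp add: card_Diff_singleton)
  qed (use alpha in simp)
qed

lemma complete_graph_witness:
  obtains V E where "simple_graph V E" "V \<noteq> {}" "avg_degree V E \<le> real d"
    "real (alpha_k k V E) / real (card V) \<le> real (k + 1) / real (d + 1)"
proof -
  define V where "V = {..d}"
  define E where "E = {e. e \<subseteq> V \<and> card e = 2}"
  have card_V: "card V = d + 1" unfolding V_def by simp
  have "card E = (d + 1) choose 2" unfolding E_def using n_subsets[of V 2] card_V V_def by simp
  then have "2 * card E = (d + 1) * d" by (simp add: choose_two)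
  then have "2 * real (card E) = real d * real (card V)"
    unfolding card_V by (metis mult.commute of_nat_mult of_nat_numeral)
  then have "avg_degree V E \<le> real d" unfolding avg_degree_def using card_V by simp
  moreover have "real (alpha_k k V E) / real (card V) \<le> real (k + 1) / real (d + 1)"
    unfolding card_V E_def using complete_graph_alpha_k[of V k] V_def
    by (intro divide_right_mono) auto
  moreover have "simple_graph V E" unfolding simple_graph_def V_def E_def by auto
  moreover have "V \<noteq> {}" unfolding V_def by auto
  ultimately show ?thesis using that by blast
qed

theorem mainTheorem8:
  fixes k d :: nat
  assumes "k \<le> d"
  shows "real (k + 1) / real (d + k + 1) \<le> f_kd k d \<and>
         f_kd k d \<le> real (k + 1) / real (d + 1)"
proof -
  let ?ratios = "{real (alpha_k k V E) / real (card V) | V E.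
                    simple_graph V E \<and> V \<noteq> {} \<and> avg_degree V E \<le> real d}"
  obtain V E where VE: "simple_graph V E" "V \<noteq> {}" "avg_degree V E \<le> real d"
    and small: "real (alpha_k k V E) / real (card V) \<le> real (k + 1) / real (d + 1)"
    by (rule complete_graph_witness)
  then have witness: "real (alpha_k k V E) / real (card V) \<in> ?ratios" by blast
  have "bdd_below ?ratios" by (rule bdd_belowI[of _ 0]) auto
  then have "f_kd k d \<le> real (k + 1) / real (d + 1)"
    unfolding f_kd_def using cInf_lower[OF witness] small by linarith
  moreover have "real (k + 1) / real (d + k + 1) \<le> f_kd k d"
    unfolding f_kd_def using witness alpha_k_ratio_lower_bound
    by (intro cInf_greatest) blast+
  ultimately show ?thesis by simp
qed

end
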